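(* Let $\lambda=(\lambda_1,\ldots,\lambda_\ell)$ be a partition with $\ell$ positive parts, and let $n\geq\ell$. If there exists $p\in\{1,\ldots,\ell-2\}$ such that $\lambda_p\geq\lambda_{p+1}\geq\lambda_{p+2}+2$, then the poset $\mathcal B_\lambda^n$ is not a lattice.
   Context: For $N\geq 1$ and a partition $\nu$ with at most $N$ positive parts, $\mathcal B_\nu^N$ is the set of semistandard Young tableaux of shape $\nu$ (rows weakly increasing, columns strictly increasing) with entries in $\{1,\ldots,N+1\}$, partially ordered by the reflexive transitive closure of $T<F_i(T)$ for $i\in\{1,\ldots,N\}$ with $F_i(T)\neq 0$. Here $F_i$ is the type A crystal lowering operator: in the reading word of $T$ (rows read from bottom to top, each row left to right) keep only letters $i$ and $i+1$, replace each $i$ by ")" and each $i+1$ by "(", and match parentheses in the usual way; if there is no unmatched ")", $F_i(T)=0$; otherwise $F_i(T)$ is obtained by changing the entry $i$ corresponding to the rightmost unmatched ")" into $i+1$. *)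

theory Defs
  imports Main
begin

definition is_partition :: "nat list \<Rightarrow> bool" where
  "is_partition lam \<longleftrightarrow> (\<forall>x\<in>set lam. 0 < x) \<and> sorted_wrt (\<ge>) lam"

text \<open>Tableaux are lists of rows (row 0 is the top row), each row a list of entries.\<close>
definition is_ssyt :: "nat \<Rightarrow> nat list \<Rightarrow> nat list list \<Rightarrow> bool" where
  "is_ssyt N nu T \<longleftrightarrow>
     map length T = nu \<and>
     (\<forall>r<length T. sorted (T ! r)) \<and>
     (\<forall>r. Suc r < length T \<longrightarrow> (\<forall>j<length (T ! Suc r). T ! r ! j < T ! Suc r ! j)) \<and>
     (\<forall>row\<in>set T. \<forall>x\<in>set row. 1 \<le> x \<and> x \<le> N + 1)"

definition B :: "nat list \<Rightarrow> nat \<Rightarrow> nat list list set" where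
  "B nu N = {T. is_ssyt N nu T}"

definition reading_word :: "nat list list \<Rightarrow> nat list" where
  "reading_word T = concat (rev T)"

text \<open>Positions of the unmatched letters i (``)'') in a word, where i+1 is ``(''.
  c counts currently unmatched ``('', k is the current position.\<close>
fun unmatched :: "nat \<Rightarrow> nat \<Rightarrow> nat \<Rightarrow> nat list \<Rightarrow> nat list" where
  "unmatched i c k [] = []"
| "unmatched i c k (x # xs) =
     (if x = i then (if 0 < c then unmatched i (c - 1) (Suc k) xs
                     else k # unmatched i c (Suc k) xs)
      else if x = Suc i then unmatched i (Suc c) (Suc k) xs
      else unmatched i c (Suc k) xs)"

definition F_word :: "nat \<Rightarrow> nat list \<Rightarrow> nat list option" where
  "F_word i w = (let u = unmatched i 0 0 w in
     if u = [] then None else Some (w[last u := Suc i]))"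

fun split_lens :: "nat list \<Rightarrow> 'a list \<Rightarrow> 'a list list" where
  "split_lens [] w = []"
| "split_lens (n # ns) w = take n w # split_lens ns (drop n w)"

text \<open>Crystal lowering operator F_i on tableaux; None represents 0.\<close>
definition F :: "nat \<Rightarrow> nat list list \<Rightarrow> nat list list option" where
  "F i T = (case F_word i (reading_word T) of
      None \<Rightarrow> None
    | Some w \<Rightarrow> Some (rev (split_lens (map length (rev T)) w)))"

definition crystal_step :: "nat \<Rightarrow> nat list list \<Rightarrow> nat list list \<Rightarrow> bool" where
  "crystal_step N T T' \<longleftrightarrow> (\<exists>i\<in>{1..N}. F i T = Some T')"

definition crystal_le :: "nat \<Rightarrow> nat list list \<Rightarrow> nat list list \<Rightarrow> bool" where
  "crystal_le N = (crystal_step N)\<^sup>*\<^sup>*"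

definition is_lattice :: "'a set \<Rightarrow> ('a \<Rightarrow> 'a \<Rightarrow> bool) \<Rightarrow> bool" where
  "is_lattice A le \<longleftrightarrow>
     (\<forall>x\<in>A. \<forall>y\<in>A.
        (\<exists>s\<in>A. le x s \<and> le y s \<and> (\<forall>z\<in>A. le x z \<and> le y z \<longrightarrow> le s z)) \<and>
        (\<exists>m\<in>A. le m x \<and> le m y \<and> (\<forall>z\<in>A. le z x \<and> le z y \<longrightarrow> le z m)))"

end

theory Submission
  imports Defs
begin

(* Write T(u, v, w) for the tableau that agrees with the Yamanouchi (highest weight) tableau of
   shape lam except that the last entry of row p is u and the last two entries of row p + 1 are
   v, w. The gap lam_(p+1) >= lam_(p+2) + 2 leaves nothing below these two entries, so
   x = T(p, p+1, p+3) and y = T(p+1, p+1, p+2) have the two upper bounds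
   z2 = F_p x = F_(p+2) y and z1 = F_p F_(p+1) x = F_(p+2) F_(p+1) y.
   For every k the number of entries >= k weakly increases along the order, and F_i raises it
   exactly for k = i + 1. Comparing these counts, an upper bound of x and y below z2 equals z2,
   and a chain from z2 to z1 would have to start with F_(p+1) z2 = T(p+2, p+1, p+3), whose counts
   already equal those of z1 although it is a different tableau. *)

fun open_count :: "nat \<Rightarrow> nat \<Rightarrow> nat list \<Rightarrow> nat" where
  "open_count i c [] = c"
| "open_count i c (x # xs) =
     (if x = i then open_count i (c - 1) xs
      else if x = Suc i then open_count i (Suc c) xs
      else open_count i c xs)"

lemma unmatched_append:
  "unmatched i c k (xs @ ys) = unmatched i c k xs @ unmatched i (open_count i c xs) (k + length xs) ys"
  by (induction xs arbitrary: c k) auto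

lemma open_count_append: "open_count i c (xs @ ys) = open_count i (open_count i c xs) ys"
  by (induction xs arbitrary: c) auto

lemma unmatched_shift_add: "unmatched i c (k + m) w = map ((+) m) (unmatched i c k w)"
  by (induction w arbitrary: c k) (auto simp flip: add_Suc)

lemma unmatched_shift: "unmatched i c k w = map ((+) k) (unmatched i c 0 w)"
  using unmatched_shift_add[of i c 0 k w] by simp

lemma unmatched_eq_Nil_if_notin: "i \<notin> set w \<Longrightarrow> unmatched i c k w = []"
  by (induction w arbitrary: c k) auto

lemma open_count_eq_if_notin: "i \<notin> set w \<Longrightarrow> Suc i \<notin> set w \<Longrightarrow> open_count i c w = c"
  by (induction w arbitrary: c) auto

lemma unmatched_replicate: "unmatched i c k (replicate m i) = [k + c..<k + m]"
  by (induction m arbitrary: c k) (auto simp: upt_conv_Cons)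

lemma open_count_replicate: "open_count i c (replicate m i) = c - m"
  by (induction m arbitrary: c) auto

lemma unmatched_replicate_Suc: "unmatched i c k (replicate m (Suc i)) = []"
  by (induction m arbitrary: c k) auto

lemma open_count_replicate_Suc: "open_count i c (replicate m (Suc i)) = c + m"
  by (induction m arbitrary: c) auto

lemma in_unmatched_nth:
  "j \<in> set (unmatched i c k w) \<Longrightarrow> k \<le> j \<and> j < k + length w \<and> w ! (j - k) = i"
  by (induction w arbitrary: c k) (fastforce simp: nth_Cons' split: if_splits)+

lemma last_unmatched_less_length:
  "unmatched i c 0 w \<noteq> [] \<Longrightarrow> last (unmatched i c 0 w) < length w"
  using in_unmatched_nth[OF last_in_set] by fastforce

lemma concat_split_lens: "concat (split_lens ns w) = take (sum_list ns) w"
  by (induction ns arbitrary: w) (auto simp: take_add)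

lemma split_lens_concat: "split_lens (map length Ts) (concat Ts) = Ts"
  by (induction Ts) auto

lemma reading_word_F:
  assumes "F i T = Some T'"
  obtains j where "j < length (reading_word T)" "reading_word T ! j = i"
    "reading_word T' = (reading_word T)[j := Suc i]"
proof -
  define w where "w = reading_word T"
  define u where "u = unmatched i 0 0 w"
  have "u \<noteq> []" and T': "T' = rev (split_lens (map length (rev T)) (w[last u := Suc i]))"
    using assms by (auto simp: F_def F_word_def w_def u_def Let_def split: option.splits if_splits)
  then have "last u \<in> set (unmatched i 0 0 w)" by (simp add: u_def)
  from in_unmatched_nth[OF this] have "last u < length w" "w ! last u = i" by auto
  moreover have "reading_word T' = w[last u := Suc i]"
    by (simp add: T' reading_word_def concat_split_lens w_def length_concat[symmetric])
  ultimately show thesis using that w_def by blast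
qed

lemma F_append_row:
  assumes "unmatched i 0 0 (concat (rev D) @ R @ concat (rev U)) \<noteq> []"
    and "last (unmatched i 0 0 (concat (rev D) @ R @ concat (rev U))) = length (concat (rev D)) + j"
    and "j < length R"
  shows "F i (U @ R # D) = Some (U @ R[j := Suc i] # D)"
proof -
  have "reading_word (U @ R # D) = concat (rev D) @ R @ concat (rev U)"
    by (simp add: reading_word_def)
  moreover have "(concat (rev D) @ R @ concat (rev U))[length (concat (rev D)) + j := Suc i]
      = concat (rev (U @ R[j := Suc i] # D))"
    using assms(3) by (simp add: list_update_append)
  moreover have "map length (rev (U @ R # D)) = map length (rev (U @ R[j := Suc i] # D))"
    by simp
  ultimately show ?thesis
    using assms(1,2) unfolding F_def F_word_def Let_def
    by (simp only: split_lens_concat if_False option.case rev_rev_ident)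
qed

lemma length_filter_list_update:
  assumes "j < length w"
  shows "length (filter P (w[j := v])) + (if P (w ! j) then 1 else 0) =
    length (filter P w) + (if P v then 1 else 0)"
  using assms by (subst (2) id_take_nth_drop[OF assms]) (simp add: upd_conv_take_nth_drop)

definition num_entries_ge :: "nat \<Rightarrow> nat list list \<Rightarrow> nat" where
  "num_entries_ge k T = length (filter ((\<le>) k) (reading_word T))"

lemma num_entries_ge_F:
  assumes "F i T = Some T'"
  shows "num_entries_ge k T' = num_entries_ge k T + (if k = Suc i then 1 else 0)"
proof -
  obtain j where "j < length (reading_word T)" "reading_word T ! j = i"
    "reading_word T' = (reading_word T)[j := Suc i]"
    using assms by (rule reading_word_F)
  with length_filter_list_update[of j "reading_word T" "(\<le>) k" "Suc i"] show ?thesis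
    unfolding num_entries_ge_def by (cases "k \<le> i") auto
qed

lemma crystal_le_num_entries_ge_mono:
  "crystal_le N T T' \<Longrightarrow> num_entries_ge k T \<le> num_entries_ge k T'"
  unfolding crystal_le_def
proof (induction rule: rtranclp_induct)
  case (step S S')
  then show ?case
    using num_entries_ge_F[of _ S S' k] by (fastforce simp: crystal_step_def)
qed simp

lemma crystal_le_antisym_num_entries_ge:
  assumes "crystal_le N T T'" and "\<And>k. num_entries_ge k T' \<le> num_entries_ge k T"
  shows "T = T'"
  using assms(1) unfolding crystal_le_def
proof (cases rule: converse_rtranclpE)
  case (step S)
  then obtain i where "F i T = Some S" by (auto simp: crystal_step_def)
  then have "num_entries_ge (Suc i) T < num_entries_ge (Suc i) S"
    by (simp add: num_entries_ge_F)
  also have "\<dots> \<le> num_entries_ge (Suc i) T'"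
    using step(2) crystal_le_num_entries_ge_mono unfolding crystal_le_def by blast
  finally show ?thesis using assms(2) not_le by blast
qed simp

definition yamanouchi_row :: "nat list \<Rightarrow> nat \<Rightarrow> nat list" where
  "yamanouchi_row lam r = replicate (lam ! r) (Suc r)"

(* Rows are indexed from 0, so rows p - 1 and p here are the rows p and p + 1 of the paper. *)
definition tab_with_rows :: "nat list \<Rightarrow> nat \<Rightarrow> nat list \<Rightarrow> nat list \<Rightarrow> nat list list" where
  "tab_with_rows lam p R0 R1 =
     map (yamanouchi_row lam) [0..<p - 1] @ R0 # R1 # map (yamanouchi_row lam) [Suc p..<length lam]"

definition word_below :: "nat list \<Rightarrow> nat \<Rightarrow> nat list" where
  "word_below lam p = concat (rev (map (yamanouchi_row lam) [Suc p..<length lam]))"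

definition word_above :: "nat list \<Rightarrow> nat \<Rightarrow> nat list" where
  "word_above lam p = concat (rev (map (yamanouchi_row lam) [0..<p - 1]))"

lemma unmatched_word_above: "p \<le> i \<Longrightarrow> unmatched i c k (word_above lam p) = []"
  by (rule unmatched_eq_Nil_if_notin) (auto simp: word_above_def yamanouchi_row_def)

lemma F_tab_with_rows_row1:
  assumes "p \<le> i"
    and "unmatched i (open_count i 0 (word_below lam p)) 0 R1 \<noteq> []"
    and "unmatched i (open_count i 0 (word_below lam p @ R1)) 0 R0 = []"
    and "R1' = R1[last (unmatched i (open_count i 0 (word_below lam p)) 0 R1) := Suc i]"
  shows "F i (tab_with_rows lam p R0 R1) = Some (tab_with_rows lam p R0 R1')"
proof -
  define U where "U = map (yamanouchi_row lam) [0..<p - 1] @ [R0]"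
  define D where "D = map (yamanouchi_row lam) [Suc p..<length lam]"
  define j where "j = last (unmatched i (open_count i 0 (word_below lam p)) 0 R1)"
  have tab: "\<And>R. tab_with_rows lam p R0 R = U @ R # D"
    by (simp add: tab_with_rows_def U_def D_def)
  have "concat (rev D) = word_below lam p"
    by (simp add: D_def word_below_def)
  moreover have "concat (rev U) = R0 @ word_above lam p"
    by (simp add: U_def word_above_def)
  ultimately have "unmatched i 0 0 (concat (rev D) @ R1 @ concat (rev U)) =
      unmatched i 0 0 (word_below lam p)
      @ map ((+) (length (word_below lam p))) (unmatched i (open_count i 0 (word_below lam p)) 0 R1)"
    using assms(3) unmatched_word_above[OF assms(1)]
    by (simp add: unmatched_append open_count_append unmatched_shift[of _ _ "length (word_below lam p)"]
        unmatched_shift[of _ _ "_ + _" R0])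
  moreover have "j < length R1"
    using last_unmatched_less_length[OF assms(2)] by (simp add: j_def)
  ultimately show ?thesis
    unfolding tab assms(4) j_def[symmetric] using assms(2) \<open>concat (rev D) = _\<close>
    by (intro F_append_row) (simp_all add: last_map j_def)
qed

lemma F_tab_with_rows_row0:
  assumes "p \<le> i"
    and "unmatched i (open_count i 0 (word_below lam p @ R1)) 0 R0 \<noteq> []"
    and "R0' = R0[last (unmatched i (open_count i 0 (word_below lam p @ R1)) 0 R0) := Suc i]"
  shows "F i (tab_with_rows lam p R0 R1) = Some (tab_with_rows lam p R0' R1)"
proof -
  define U where "U = map (yamanouchi_row lam) [0..<p - 1]"
  define D where "D = R1 # map (yamanouchi_row lam) [Suc p..<length lam]"
  define V where "V = word_below lam p @ R1"
  define j where "j = last (unmatched i (open_count i 0 V) 0 R0)"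
  have tab: "\<And>R. tab_with_rows lam p R R1 = U @ R # D"
    by (simp add: tab_with_rows_def U_def D_def)
  have "concat (rev D) = V"
    by (simp add: D_def V_def word_below_def)
  moreover have "concat (rev U) = word_above lam p"
    by (simp add: U_def word_above_def)
  ultimately have "unmatched i 0 0 (concat (rev D) @ R0 @ concat (rev U)) =
      unmatched i 0 0 V @ map ((+) (length V)) (unmatched i (open_count i 0 V) 0 R0)"
    using unmatched_word_above[OF assms(1)]
    by (simp add: unmatched_append unmatched_shift[of _ _ "length V"])
  moreover have "j < length R0"
    using last_unmatched_less_length[OF assms(2)] by (simp add: j_def V_def)
  ultimately show ?thesis
    unfolding tab assms(3) V_def[symmetric] j_def[symmetric] using assms(2) \<open>concat (rev D) = V\<close>
    by (intro F_append_row) (simp_all add: last_map j_def V_def)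
qed

lemma word_below_ge: "x \<in> set (word_below lam p) \<Longrightarrow> Suc (Suc p) \<le> x"
  by (auto simp: word_below_def yamanouchi_row_def)

lemma open_count_word_below_p: "open_count p c (word_below lam p) = c"
  by (rule open_count_eq_if_notin) (use word_below_ge in fastforce)+

lemma word_below_Cons:
  "Suc p < length lam \<Longrightarrow> word_below lam p = word_below lam (Suc p) @ yamanouchi_row lam (Suc p)"
  by (simp add: word_below_def upt_conv_Cons)

lemma open_count_word_below_Suc_p:
  assumes "Suc p < length lam"
  shows "open_count (Suc p) 0 (word_below lam p) = lam ! Suc p"
proof -
  have "open_count (Suc p) 0 (word_below lam (Suc p)) = 0"
    by (rule open_count_eq_if_notin) (use word_below_ge in fastforce)+
  then show ?thesis
    using assms
    by (simp add: word_below_Cons open_count_append yamanouchi_row_def open_count_replicate_Suc)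
qed

lemma partition_nth_antimono:
  "is_partition lam \<Longrightarrow> i \<le> j \<Longrightarrow> j < length lam \<Longrightarrow> lam ! j \<le> lam ! i"
  unfolding is_partition_def by (metis le_eq_less_or_eq order_refl sorted_wrt_nth_less)

lemma open_count_word_below_Suc_Suc_p:
  assumes "is_partition lam" and "Suc p < length lam"
  shows "open_count (Suc (Suc p)) 0 (word_below lam p) = 0"
proof -
  have "open_count (Suc (Suc p)) 0 (word_below lam (Suc p)) \<le> lam ! Suc p"
  proof (cases "Suc (Suc p) < length lam")
    case True
    then show ?thesis
      using open_count_word_below_Suc_p partition_nth_antimono[OF assms(1)] by simp
  next
    case False
    then show ?thesis by (simp add: word_below_def)
  qed
  with assms(2) show ?thesis
    by (simp add: word_below_Cons open_count_append yamanouchi_row_def open_count_replicate)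
qed

context
  fixes lam :: "nat list" and p :: nat
  assumes partition: "is_partition lam"
    and p_pos: "1 \<le> p"
    and p_less: "p + 1 < length lam"
    and gap: "lam ! (p + 1) + 2 \<le> lam ! p"
begin

lemma row_length_bounds: "lam ! p \<le> lam ! (p - 1)" "0 < lam ! (p + 1)"
  using partition_nth_antimono[OF partition, of "p - 1" p] p_less partition
  unfolding is_partition_def by auto

lemma Suc_Suc_row_p_minus_2: "Suc (Suc (lam ! p - 2)) = lam ! p"
  using gap by simp

lemma length_tab_with_rows: "length (tab_with_rows lam p R0 R1) = length lam"
  using p_pos p_less by (simp add: tab_with_rows_def)

lemma nth_tab_with_rows:
  "r < length lam \<Longrightarrow> tab_with_rows lam p R0 R1 ! r =
     (if r = p - 1 then R0 else if r = p then R1 else yamanouchi_row lam r)"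
  using p_pos p_less by (auto simp: tab_with_rows_def nth_append nth_Cons')

lemma tab_with_rows_column_strict:
  assumes "length R0 = lam ! (p - 1)" and "length R1 = lam ! p"
    and "set R0 \<subseteq> {p..n + 1}"
    and "\<And>j. j < lam ! p \<Longrightarrow> R0 ! j < R1 ! j"
    and "\<And>j. j < lam ! (p + 1) \<Longrightarrow> R1 ! j < p + 2"
    and r: "Suc r < length lam" and j: "j < length (tab_with_rows lam p R0 R1 ! Suc r)"
  shows "tab_with_rows lam p R0 R1 ! r ! j < tab_with_rows lam p R0 R1 ! Suc r ! j"
proof -
  have j_less: "j < lam ! Suc r" and "lam ! Suc r \<le> lam ! r"
    using j r assms(1,2) partition_nth_antimono[OF partition, of r "Suc r"]
    by (auto simp: nth_tab_with_rows yamanouchi_row_def split: if_splits)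
  consider "Suc r = p - 1" | "r = p - 1" | "r = p" | "Suc r \<noteq> p - 1" "r \<noteq> p - 1" "r \<noteq> p"
    by blast
  then show ?thesis
  proof cases
    case 1
    then have "r \<noteq> p - 1" "r \<noteq> p" "Suc r < p" using p_pos by auto
    then have upper: "tab_with_rows lam p R0 R1 ! r ! j = Suc r"
      using r j_less \<open>lam ! Suc r \<le> lam ! r\<close>
      by (simp add: nth_tab_with_rows yamanouchi_row_def)
    have lower: "tab_with_rows lam p R0 R1 ! Suc r = R0"
      unfolding 1 using p_less by (simp add: nth_tab_with_rows)
    have "p \<le> R0 ! j"
      using lower j assms(3) by (metis atLeastAtMost_iff nth_mem subsetD)
    then show ?thesis using upper lower \<open>Suc r < p\<close> by simp
  next
    case 2
    then show ?thesis using r p_pos j_less assms(4) by (auto simp: nth_tab_with_rows)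
  next
    case 3
    then show ?thesis using r p_pos j_less assms(5) by (auto simp: nth_tab_with_rows yamanouchi_row_def)
  next
    case 4
    then show ?thesis using r p_pos j_less \<open>lam ! Suc r \<le> lam ! r\<close>
      by (auto simp: nth_tab_with_rows yamanouchi_row_def)
  qed
qed

lemma tab_with_rows_entries:
  assumes "length lam \<le> n" and "set R0 \<subseteq> {p..n + 1}" and "set R1 \<subseteq> {p..n + 1}"
    and "r < length lam"
  shows "set (tab_with_rows lam p R0 R1 ! r) \<subseteq> {1..n + 1}"
proof -
  have "set (yamanouchi_row lam r) \<subseteq> {1..n + 1}"
    using assms(1,4) by (auto simp: yamanouchi_row_def)
  moreover have "{p..n + 1} \<subseteq> {1..n + 1}"
    using p_pos by auto
  ultimately show ?thesis
    using assms(2,3,4) by (auto simp only: nth_tab_with_rows split: if_split)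
qed

lemma tab_with_rows_ssyt:
  assumes "length lam \<le> n"
    and "length R0 = lam ! (p - 1)" and "length R1 = lam ! p"
    and "sorted R0" and "sorted R1"
    and "set R0 \<subseteq> {p..n + 1}" and "set R1 \<subseteq> {p..n + 1}"
    and "\<And>j. j < lam ! p \<Longrightarrow> R0 ! j < R1 ! j"
    and "\<And>j. j < lam ! (p + 1) \<Longrightarrow> R1 ! j < p + 2"
  shows "is_ssyt n lam (tab_with_rows lam p R0 R1)"
  unfolding is_ssyt_def length_tab_with_rows
proof (intro conjI allI impI ballI)
  show "map length (tab_with_rows lam p R0 R1) = lam"
    by (rule nth_equalityI)
      (use assms(2,3) in \<open>auto simp: length_tab_with_rows nth_tab_with_rows yamanouchi_row_def\<close>)
  show "sorted (tab_with_rows lam p R0 R1 ! r)" if "r < length lam" for r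
    using that assms(4,5) by (auto simp: nth_tab_with_rows yamanouchi_row_def)
  show "tab_with_rows lam p R0 R1 ! r ! j < tab_with_rows lam p R0 R1 ! Suc r ! j"
    if "Suc r < length lam" and "j < length (tab_with_rows lam p R0 R1 ! Suc r)" for r j
    using assms(2,3,6,8,9) that by (rule tab_with_rows_column_strict)
  show "1 \<le> x" and "x \<le> n + 1"
    if "row \<in> set (tab_with_rows lam p R0 R1)" and "x \<in> set row" for row x
    using that tab_with_rows_entries[OF assms(1,6,7)]
    by (metis atLeastAtMost_iff in_set_conv_nth length_tab_with_rows subsetD)+
qed

definition tab_ends :: "nat \<Rightarrow> nat \<Rightarrow> nat \<Rightarrow> nat list list" where
  "tab_ends u v w = tab_with_rows lam p
     (replicate (lam ! (p - 1) - 1) p @ [u]) (replicate (lam ! p - 2) (p + 1) @ [v, w])"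

lemmas bracket_simps = unmatched_append open_count_append unmatched_replicate open_count_replicate
  unmatched_replicate_Suc open_count_replicate_Suc unmatched_eq_Nil_if_notin open_count_eq_if_notin
  list_update_append open_count_word_below_p open_count_word_below_Suc_p[OF p_less[simplified]]
  open_count_word_below_Suc_Suc_p[OF partition p_less[simplified]] Suc_Suc_row_p_minus_2

lemma F_p_tab_ends:
  assumes "p + 1 \<le> v" and "p + 1 < w"
  shows "F p (tab_ends p v w) = Some (tab_ends (p + 1) v w)"
  unfolding tab_ends_def
  by (rule F_tab_with_rows_row0)
    (use assms gap row_length_bounds in \<open>auto simp: bracket_simps\<close>)

lemma F_p2_tab_ends:
  assumes "u \<le> p + 1" and "v \<le> p + 2"
  shows "F (p + 2) (tab_ends u v (p + 2)) = Some (tab_ends u v (p + 3))"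
  unfolding tab_ends_def
  by (rule F_tab_with_rows_row1)
    (use assms gap row_length_bounds in \<open>auto simp: bracket_simps\<close>)

lemma F_p1_tab_ends_row1:
  assumes "u \<le> p + 1" and "p + 2 \<le> w" and "w \<le> p + 3" and "u = p + 1 \<Longrightarrow> w = p + 2"
  shows "F (p + 1) (tab_ends u (p + 1) w) = Some (tab_ends u (p + 2) w)"
  unfolding tab_ends_def
  by (rule F_tab_with_rows_row1)
    (use assms gap row_length_bounds in \<open>auto simp: bracket_simps\<close>)

lemma F_p1_tab_ends_row0:
  assumes "v \<le> p + 1" and "p + 3 \<le> w"
  shows "F (p + 1) (tab_ends (p + 1) v w) = Some (tab_ends (p + 2) v w)"
  unfolding tab_ends_def
  by (rule F_tab_with_rows_row0)
    (use assms gap row_length_bounds in \<open>auto simp: bracket_simps\<close>)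

lemma tab_ends_in_B:
  assumes "length lam \<le> n" and "p \<le> u" and "p + 1 \<le> v" and "v \<le> w" and "u < w" and "w \<le> p + 3"
  shows "tab_ends u v w \<in> B lam n"
  unfolding B_def mem_Collect_eq tab_ends_def
  by (rule tab_with_rows_ssyt)
    (use assms gap row_length_bounds p_less in \<open>auto simp: nth_append sorted_append nth_Cons'\<close>)

(* Both sides moved so that no subtraction occurs. *)
lemma num_entries_ge_tab_ends:
  "num_entries_ge k (tab_ends u v w) + of_bool (k \<le> u') + of_bool (k \<le> v') + of_bool (k \<le> w') =
   num_entries_ge k (tab_ends u' v' w') + of_bool (k \<le> u) + of_bool (k \<le> v) + of_bool (k \<le> w)"
  by (simp add: num_entries_ge_def tab_ends_def tab_with_rows_def reading_word_def)

lemma tab_ends_eqD: "tab_ends u v w = tab_ends u' v' w' \<Longrightarrow> u = u'"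
proof -
  assume "tab_ends u v w = tab_ends u' v' w'"
  then have "last (tab_ends u v w ! (p - 1)) = last (tab_ends u' v' w' ! (p - 1))"
    by simp
  then show "u = u'"
    using p_less by (simp add: tab_ends_def nth_tab_with_rows)
qed

lemma crystal_le_tab_ends_upper_bounds:
  assumes "length lam \<le> n"
  shows "crystal_le n (tab_ends p (p + 1) (p + 3)) (tab_ends (p + 1) (p + 1) (p + 3))"
    and "crystal_le n (tab_ends (p + 1) (p + 1) (p + 2)) (tab_ends (p + 1) (p + 1) (p + 3))"
    and "crystal_le n (tab_ends p (p + 1) (p + 3)) (tab_ends (p + 1) (p + 2) (p + 3))"
    and "crystal_le n (tab_ends (p + 1) (p + 1) (p + 2)) (tab_ends (p + 1) (p + 2) (p + 3))"
proof -
  have step: "crystal_le n T T'" if "F i T = Some T'" "i \<in> {p, p + 1, p + 2}" for i T T'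
    unfolding crystal_le_def crystal_step_def
    using that assms p_pos p_less by (intro r_into_rtranclp) auto
  have trans: "crystal_le n T T''" if "crystal_le n T T'" "crystal_le n T' T''" for T T' T''
    using that unfolding crystal_le_def by (rule rtranclp_trans)
  show "crystal_le n (tab_ends p (p + 1) (p + 3)) (tab_ends (p + 1) (p + 1) (p + 3))"
    by (rule step[OF F_p_tab_ends]) simp_all
  show "crystal_le n (tab_ends (p + 1) (p + 1) (p + 2)) (tab_ends (p + 1) (p + 1) (p + 3))"
    by (rule step[OF F_p2_tab_ends]) simp_all
  show "crystal_le n (tab_ends p (p + 1) (p + 3)) (tab_ends (p + 1) (p + 2) (p + 3))"
    by (rule trans[OF step[OF F_p1_tab_ends_row1] step[OF F_p_tab_ends]]) simp_all
  show "crystal_le n (tab_ends (p + 1) (p + 1) (p + 2)) (tab_ends (p + 1) (p + 2) (p + 3))"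
    by (rule trans[OF step[OF F_p1_tab_ends_row1] step[OF F_p2_tab_ends]]) simp_all
qed

lemma crystal_le_tab_ends_join:
  assumes "crystal_le N (tab_ends p (p + 1) (p + 3)) s"
    and "crystal_le N (tab_ends (p + 1) (p + 1) (p + 2)) s"
    and "crystal_le N s (tab_ends (p + 1) (p + 1) (p + 3))"
  shows "s = tab_ends (p + 1) (p + 1) (p + 3)"
proof (rule crystal_le_antisym_num_entries_ge[OF assms(3)])
  fix k
  have "num_entries_ge k (tab_ends p (p + 1) (p + 3)) \<le> num_entries_ge k s"
    using assms(1) by (rule crystal_le_num_entries_ge_mono)
  moreover have "num_entries_ge k (tab_ends (p + 1) (p + 1) (p + 2)) \<le> num_entries_ge k s"
    using assms(2) by (rule crystal_le_num_entries_ge_mono)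
  moreover note num_entries_ge_tab_ends[of k "p + 1" "p + 1" "p + 3" p "p + 1" "p + 3"]
    num_entries_ge_tab_ends[of k "p + 1" "p + 1" "p + 3" "p + 1" "p + 1" "p + 2"]
  ultimately show "num_entries_ge k (tab_ends (p + 1) (p + 1) (p + 3)) \<le> num_entries_ge k s"
    by (cases "k = p + 1") (auto simp: of_bool_def split: if_splits)
qed

lemma not_crystal_le_tab_ends:
  "\<not> crystal_le N (tab_ends (p + 1) (p + 1) (p + 3)) (tab_ends (p + 1) (p + 2) (p + 3))"
proof
  define z1 z2 where "z1 = tab_ends (p + 1) (p + 2) (p + 3)" and "z2 = tab_ends (p + 1) (p + 1) (p + 3)"
  have num_z1: "num_entries_ge k z1 = num_entries_ge k z2 + (if k = p + 2 then 1 else 0)" for k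
    using num_entries_ge_tab_ends[of k "p + 1" "p + 2" "p + 3" "p + 1" "p + 1" "p + 3"]
    by (cases "k = p + 2") (auto simp: z1_def z2_def of_bool_def split: if_splits)
  assume "crystal_le N z2 z1"
  then show False
    unfolding crystal_le_def
  proof (cases rule: converse_rtranclpE)
    case base
    then show False using num_z1[of "p + 2"] by simp
  next
    case (step S)
    then obtain i where F_i: "F i z2 = Some S" by (auto simp: crystal_step_def)
    have "num_entries_ge (Suc i) z2 < num_entries_ge (Suc i) S"
      using num_entries_ge_F[OF F_i] by simp
    also have "\<dots> \<le> num_entries_ge (Suc i) z1"
      using step(2) crystal_le_num_entries_ge_mono unfolding crystal_le_def by blast
    finally have "i = p + 1" using num_z1[of "Suc i"] by (auto split: if_splits)
    then have "S = tab_ends (p + 2) (p + 1) (p + 3)"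
      using F_i F_p1_tab_ends_row0[of "p + 1" "p + 3"] by (simp add: z2_def)
    moreover have "S = z1"
    proof (rule crystal_le_antisym_num_entries_ge)
      show "crystal_le N S z1" using step(2) by (simp add: crystal_le_def)
      show "num_entries_ge k z1 \<le> num_entries_ge k S" for k
        using num_entries_ge_tab_ends[of k "p + 1" "p + 2" "p + 3" "p + 2" "p + 1" "p + 3"]
        by (simp add: z1_def \<open>S = tab_ends (p + 2) (p + 1) (p + 3)\<close>)
    qed
    ultimately show False
      using tab_ends_eqD[of "p + 1" "p + 2" "p + 3" "p + 2" "p + 1" "p + 3"] by (simp add: z1_def)
  qed
qed

lemma crystal_poset_not_lattice:
  assumes "length lam \<le> n"
  shows "\<not> is_lattice (B lam n) (crystal_le n)"
proof
  assume "is_lattice (B lam n) (crystal_le n)"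
  moreover have "tab_ends p (p + 1) (p + 3) \<in> B lam n"
    and "tab_ends (p + 1) (p + 1) (p + 2) \<in> B lam n"
    and "tab_ends (p + 1) (p + 2) (p + 3) \<in> B lam n"
    and "tab_ends (p + 1) (p + 1) (p + 3) \<in> B lam n"
    using assms by (auto intro: tab_ends_in_B)
  ultimately obtain s where "crystal_le n (tab_ends p (p + 1) (p + 3)) s"
    and "crystal_le n (tab_ends (p + 1) (p + 1) (p + 2)) s"
    and "crystal_le n s (tab_ends (p + 1) (p + 2) (p + 3))"
    and "crystal_le n s (tab_ends (p + 1) (p + 1) (p + 3))"
    using crystal_le_tab_ends_upper_bounds[OF assms] unfolding is_lattice_def by meson
  then show False
    using crystal_le_tab_ends_join not_crystal_le_tab_ends by metis
qed

end

(* The hypothesis lam ! (p - 1) >= lam ! p is implied by is_partition lam. *)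
theorem lemma5p6:
  fixes lam :: "nat list" and n p :: nat
  assumes "is_partition lam"
    and "length lam \<le> n"
    and "1 \<le> p" and "p \<le> length lam - 2"
    and "lam ! (p - 1) \<ge> lam ! p"
    and "lam ! p \<ge> lam ! (p + 1) + 2"
  shows "\<not> is_lattice (B lam n) (crystal_le n)"
proof -
  have "p + 1 < length lam"
    using assms(3,4) by simp
  then show ?thesis
    using crystal_poset_not_lattice[OF assms(1,3)] assms(2,6) by blast
qed

end
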